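(* Let $b\ge2$, $n\ge1$ be integers and $\mathcal D=\{d,\dots,d+b-1\}$ a set of consecutive integers containing $0$. For $i,j\in\Omega_n(-b,\mathcal D)$, the transition probability $p_{i,j}=\Pr(C_{t+1}=j\mid C_t=i)$ of the $n$-carry process over $(-b,\mathcal D)$ is $$p_{i,j}=\frac{1}{b^n}\sum_{r=0}^{\,-j+1+\left\lfloor\frac{-i-1+(1-n)d}{b}\right\rfloor}(-1)^r\binom{n+1}{r}\binom{n-b(j-1+r)-i-1+(1-n)d}{n},$$ (an empty sum being $0$; in the range of summation the upper entries of the binomial coefficients are nonnegative integers, and $\binom{N}{n}=0$ for $0\le N<n$).
   Context: Carries process over the negative base $(-b,\mathcal D)$: let $\{X_{k,i}\}_{1\le k\le n,\ i\ge0}$ be independent random variables, each uniformly distributed on $\mathcal D$. Set $C_0=0$; for $i\ge0$ let $A_i$ be the unique element of $\mathcal D$ with $A_i\equiv C_i+X_{1,i}+\dots+X_{n,i}\pmod b$, and set $C_{i+1}=(C_i+X_{1,i}+\dots+X_{n,i}-A_i)/(-b)$. The state space $\Omega_n(-b,\mathcal D)$ is the set of integers $c$ with $\Pr(C_i=c)>0$ for some $i\ge0$. *)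

theory Defs
  imports "HOL-Probability.Probability"
begin

definition digits :: "int \<Rightarrow> int \<Rightarrow> int set" where
  "digits b d = {d..d+b-1}"

fun sum_dist :: "int \<Rightarrow> int \<Rightarrow> nat \<Rightarrow> int pmf" where
  "sum_dist b d 0 = return_pmf 0"
| "sum_dist b d (Suc k) =
     bind_pmf (sum_dist b d k) (\<lambda>s. map_pmf (\<lambda>x. s + x) (pmf_of_set (digits b d)))"

definition digit_out :: "int \<Rightarrow> int \<Rightarrow> int \<Rightarrow> int" where
  "digit_out b d v = (THE a. a \<in> digits b d \<and> a mod b = v mod b)"

definition carry_step :: "int \<Rightarrow> int \<Rightarrow> int \<Rightarrow> int \<Rightarrow> int" where
  "carry_step b d c s = (c + s - digit_out b d (c + s)) div (- b)"

fun carry_dist :: "int \<Rightarrow> int \<Rightarrow> nat \<Rightarrow> nat \<Rightarrow> int pmf" where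
  "carry_dist b d n 0 = return_pmf 0"
| "carry_dist b d n (Suc t) =
     bind_pmf (carry_dist b d n t) (\<lambda>c. map_pmf (carry_step b d c) (sum_dist b d n))"

definition carry_joint :: "int \<Rightarrow> int \<Rightarrow> nat \<Rightarrow> nat \<Rightarrow> (int \<times> int) pmf" where
  "carry_joint b d n t =
     bind_pmf (carry_dist b d n t) (\<lambda>c. map_pmf (\<lambda>s. (c, carry_step b d c s)) (sum_dist b d n))"

definition trans_prob :: "int \<Rightarrow> int \<Rightarrow> nat \<Rightarrow> nat \<Rightarrow> int \<Rightarrow> int \<Rightarrow> real" where
  "trans_prob b d n t i j = pmf (carry_joint b d n t) (i, j) / pmf (carry_dist b d n t) i"

definition state_space :: "int \<Rightarrow> int \<Rightarrow> nat \<Rightarrow> int set" where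
  "state_space b d n = {c. \<exists>t. pmf (carry_dist b d n t) c > 0}"

end

theory Submission
  imports Defs
begin

text \<open>
  The carry step is \<open>C' = -((C + S - d) div b)\<close> with \<open>S = X\<^sub>1 + \<dots> + X\<^sub>n\<close>, so
  \<open>C' = j\<close> exactly when \<open>S\<close> lies in a window of \<open>b\<close> consecutive integers. Adding one
  more uniform digit to \<open>S\<close> turns the probability of such a window into \<open>b\<close> times a
  point probability of \<open>X\<^sub>1 + \<dots> + X\<^sub>n\<^sub>+\<^sub>1\<close>. The point probabilities of a sum of \<open>k\<close>
  uniform digits follow by induction on \<open>k\<close> from the classical inclusion-exclusion count
  of compositions with parts below \<open>b\<close>: the convolution with one more digit is a
  telescoping window sum of the counts of unrestricted weak compositions, and Pascal's
  rule reassembles the alternating binomial coefficients.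
\<close>

lemma int_div_diff_mult_self: "(b::int) \<noteq> 0 \<Longrightarrow> (m - b * r) div b = m div b - r"
  by (metis add.commute diff_conv_add_uminus div_mult_self1 mult.commute mult_minus_left)

lemma int_nonneg_diff_mult_iff_le_div:
  "0 < (b::int) \<Longrightarrow> 0 \<le> m - b * r \<longleftrightarrow> r \<le> m div b"
  using pos_imp_zdiv_nonneg_iff[of b "m - b * r"] by (simp add: int_div_diff_mult_self)

lemma int_div_eq_iff:
  "0 < (b::int) \<Longrightarrow> x div b = q \<longleftrightarrow> b * q \<le> x \<and> x < b * q + b"
  using zdiv_eq_0_iff[of "x - b * q" b] by (auto simp: int_div_diff_mult_self)

lemma alternating_binomial_sum_diff:
  fixes A :: "nat \<Rightarrow> 'a :: comm_ring_1"
  shows "(\<Sum>r\<le>k. (-1) ^ r * of_nat (k choose r) * (A r - A (Suc r))) =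
         (\<Sum>r\<le>Suc k. (-1) ^ r * of_nat (Suc k choose r) * A r)"
proof -
  have shifted: "A 0 + (\<Sum>r\<le>k. (-1) ^ Suc r * of_nat (k choose Suc r) * A (Suc r)) =
      (\<Sum>r\<le>k. (-1) ^ r * of_nat (k choose r) * A r)"
    using sum.atMost_Suc_shift[of "\<lambda>r. (-1) ^ r * of_nat (k choose r) * A r" k]
    by (simp add: binomial_eq_0)
  have "(\<Sum>r\<le>Suc k. (-1) ^ r * of_nat (Suc k choose r) * A r)
      = A 0 + (\<Sum>r\<le>k. (-1) ^ Suc r * of_nat (k choose Suc r) * A (Suc r))
            + (\<Sum>r\<le>k. (-1) ^ Suc r * of_nat (k choose r) * A (Suc r))"
    by (subst sum.atMost_Suc_shift) (simp add: sum.distrib[symmetric] algebra_simps)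
  also have "\<dots> = (\<Sum>r\<le>k. (-1) ^ r * of_nat (k choose r) * (A r - A (Suc r)))"
    unfolding shifted by (simp add: sum.distrib[symmetric] algebra_simps)
  finally show ?thesis ..
qed

fun weak_compositions :: "nat \<Rightarrow> int \<Rightarrow> real" where
  "weak_compositions 0 m = (if m = 0 then 1 else 0)"
| "weak_compositions (Suc k) m = (\<Sum>y\<in>{0..m}. weak_compositions k y)"

lemma weak_compositions_neg: "m < 0 \<Longrightarrow> weak_compositions k m = 0"
  by (cases k) auto

lemma weak_compositions_zero: "weak_compositions k 0 = 1"
  by (induction k) auto

lemma weak_compositions_Suc_diff:
  "weak_compositions (Suc k) m = weak_compositions (Suc k) (m - 1) + weak_compositions k m"
proof (cases "m < 0")
  case True
  then show ?thesis by (simp add: weak_compositions_neg)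
next
  case False
  then have "{0..m} = insert m {0..m - 1}" by auto
  then show ?thesis by simp
qed

lemma sum_weak_compositions_window:
  "(\<Sum>x<c. weak_compositions k (m - int x)) =
     weak_compositions (Suc k) m - weak_compositions (Suc k) (m - int c)"
proof (induction c)
  case (Suc c)
  then show ?case
    using weak_compositions_Suc_diff[of k "m - int c"] by (simp add: algebra_simps)
qed simp

lemma weak_compositions_Suc_nat: "weak_compositions (Suc k) (int m) = real ((m + k) choose k)"
proof (induction k arbitrary: m)
  case 0
  have "{0..int m} = insert 0 {1..int m}" by auto
  then show ?case by simp
next
  case (Suc k)
  note IH_k = Suc.IH
  show ?case
  proof (induction m)
    case 0
    then show ?case using weak_compositions_zero by simp
  next
    case (Suc m)
    have "weak_compositions (Suc (Suc k)) (int (Suc m))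
        = weak_compositions (Suc (Suc k)) (int m) + weak_compositions (Suc k) (int (Suc m))"
      using weak_compositions_Suc_diff[of "Suc k" "int (Suc m)"] by simp
    also have "\<dots> = real ((Suc m + Suc k) choose Suc k)"
      using Suc.IH IH_k[of "Suc m"]
      by (simp del: weak_compositions.simps add: add.commute)
    finally show ?case .
  qed
qed

lemma weak_compositions_Suc_gchoose:
  assumes "0 \<le> m"
  shows "weak_compositions (Suc k) m = real_of_int (int k + m) gchoose k"
proof -
  have "real_of_int (int k + m) = of_nat (nat m + k)" using assms by simp
  then show ?thesis
    using weak_compositions_Suc_nat[of k "nat m"] assms
    by (simp add: binomial_gbinomial add.commute)
qed

lemma sum_digits_eq_sum_lessThan:
  assumes "b \<ge> 0"
  shows "(\<Sum>x\<in>digits b d. f x) = (\<Sum>y<nat b. f (d + int y))"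
  unfolding digits_def
  by (rule sum.reindex_bij_witness[where i="\<lambda>y. d + int y" and j="\<lambda>x. nat (x - d)"])
     (use assms in auto)

lemma sum_dist_Suc':
  "sum_dist b d (Suc k) =
     bind_pmf (pmf_of_set (digits b d)) (\<lambda>x. map_pmf (\<lambda>s. s + x) (sum_dist b d k))"
  by (simp add: map_pmf_def bind_commute_pmf[of "sum_dist b d k"] o_def)

lemma pmf_sum_dist_Suc:
  assumes "b \<ge> 1"
  shows "pmf (sum_dist b d (Suc k)) s =
    (\<Sum>x\<in>digits b d. pmf (sum_dist b d k) (s - x)) / real_of_int b"
proof -
  have digits: "digits b d \<noteq> {}" "finite (digits b d)" "real (card (digits b d)) = b"
    using assms by (auto simp: digits_def)
  have shift: "pmf (map_pmf (\<lambda>s. s + x) (sum_dist b d k)) s = pmf (sum_dist b d k) (s - x)" for x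
    using pmf_map_inj'[of "\<lambda>s. s + x" "sum_dist b d k" "s - x"] by (simp add: inj_def)
  show ?thesis
    unfolding sum_dist_Suc' pmf_bind_pmf_of_set[OF digits(1,2)] digits(3) shift ..
qed

lemma pmf_sum_dist:
  assumes "b \<ge> 1"
  shows "pmf (sum_dist b d k) s =
    (\<Sum>r\<le>k. (-1) ^ r * real (k choose r) * weak_compositions k (s - int k * d - b * int r))
      / real_of_int b ^ k"
proof (induction k arbitrary: s)
  case 0
  then show ?case by (simp add: indicator_def)
next
  case (Suc k)
  define A where "A r = weak_compositions (Suc k) (s - int (Suc k) * d - b * int r)" for r
  have window: "(\<Sum>y<nat b. weak_compositions k (s - (d + int y) - int k * d - b * int r))
      = A r - A (Suc r)" for r
  proof -
    have "(\<Sum>y<nat b. weak_compositions k (s - (d + int y) - int k * d - b * int r))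
        = (\<Sum>y<nat b. weak_compositions k ((s - int (Suc k) * d - b * int r) - int y))"
      by (rule sum.cong) (auto simp: algebra_simps)
    then show ?thesis
      unfolding sum_weak_compositions_window A_def using assms by (simp add: algebra_simps)
  qed
  have "pmf (sum_dist b d (Suc k)) s
      = (\<Sum>y<nat b. pmf (sum_dist b d k) (s - (d + int y))) / real_of_int b"
    using pmf_sum_dist_Suc[OF assms]
      sum_digits_eq_sum_lessThan[of b "\<lambda>x. pmf (sum_dist b d k) (s - x)" d] assms
    by simp
  also have "\<dots> = (\<Sum>y<nat b. \<Sum>r\<le>k. (-1) ^ r * real (k choose r) *
        weak_compositions k (s - (d + int y) - int k * d - b * int r)) / real_of_int b ^ Suc k"
    unfolding Suc.IH by (simp add: sum_divide_distrib[symmetric])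
  also have "\<dots> = (\<Sum>r\<le>k. (-1) ^ r * real (k choose r) *
        (\<Sum>y<nat b. weak_compositions k (s - (d + int y) - int k * d - b * int r)))
      / real_of_int b ^ Suc k"
    by (subst sum.swap) (simp add: sum_distrib_left)
  also have "\<dots> = (\<Sum>r\<le>Suc k. (-1) ^ r * real (Suc k choose r) * A r) / real_of_int b ^ Suc k"
    unfolding window alternating_binomial_sum_diff ..
  finally show ?case unfolding A_def .
qed

text \<open>Beyond \<open>r = m div b\<close> the argument of the composition count is negative, and beyond
  \<open>r = Suc k\<close> the binomial coefficient vanishes.\<close>

lemma pmf_sum_dist_Suc_gchoose:
  fixes b d s :: int and k :: nat
  assumes "b \<ge> 1"
  defines "m \<equiv> s - int (Suc k) * d"
  shows "pmf (sum_dist b d (Suc k)) s =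
    (\<Sum>r\<in>{0 .. m div b}. (-1) ^ nat r * real (Suc k choose nat r) *
       (real_of_int (int k + m - b * r) gchoose k)) / real_of_int b ^ Suc k"
proof -
  define g where
    "g r = (-1) ^ nat r * real (Suc k choose nat r) * weak_compositions (Suc k) (m - b * r)" for r
  have "(\<Sum>r\<le>Suc k. (-1) ^ r * real (Suc k choose r) *
          weak_compositions (Suc k) (s - int (Suc k) * d - b * int r))
      = (\<Sum>r\<in>{0 .. int (Suc k)}. g r)"
    by (rule sum.reindex_bij_witness[where i=nat and j=int]) (auto simp: g_def m_def)
  also have "\<dots> = (\<Sum>r\<in>{0 .. min (m div b) (int (Suc k))}. g r)"
    using assms int_nonneg_diff_mult_iff_le_div[of b m]
    by (intro sum.mono_neutral_right) (auto simp: g_def weak_compositions_neg)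
  also have "\<dots> = (\<Sum>r\<in>{0 .. m div b}. g r)"
    by (intro sum.mono_neutral_left) (auto simp: g_def)
  also have "\<dots> = (\<Sum>r\<in>{0 .. m div b}. (-1) ^ nat r * real (Suc k choose nat r) *
       (real_of_int (int k + m - b * r) gchoose k))"
  proof (rule sum.cong[OF refl])
    fix r
    assume "r \<in> {0 .. m div b}"
    then have nonneg: "0 \<le> m - b * r"
      using assms int_nonneg_diff_mult_iff_le_div[of b m] by auto
    show "g r = (-1) ^ nat r * real (Suc k choose nat r) *
        (real_of_int (int k + m - b * r) gchoose k)"
      unfolding g_def weak_compositions_Suc_gchoose[OF nonneg] by (simp add: add_diff_eq)
  qed
  finally show ?thesis
    unfolding pmf_sum_dist[OF assms(1)] by simp
qed

lemma digit_out_eq: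
  assumes "b \<ge> 1"
  shows "digit_out b d v = d + (v - d) mod b"
  unfolding digit_out_def
proof (rule the_equality)
  show "d + (v - d) mod b \<in> digits b d \<and> (d + (v - d) mod b) mod b = v mod b"
    using assms mod_add_right_eq[of d "v - d" b] by (simp add: digits_def)
next
  fix a
  assume a: "a \<in> digits b d \<and> a mod b = v mod b"
  then have "(a - d) mod b = (v - d) mod b"
    by (intro mod_diff_cong) auto
  moreover have "(a - d) mod b = a - d"
    using a by (simp add: digits_def)
  ultimately show "a = d + (v - d) mod b" by simp
qed

lemma carry_step_eq:
  assumes "b \<ge> 1"
  shows "carry_step b d c s = - ((c + s - d) div b)"
proof -
  have "c + s - digit_out b d (c + s) = b * ((c + s - d) div b)"
    using digit_out_eq[OF assms, of d "c + s"] minus_mod_eq_mult_div[of "c + s - d" b] by simp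
  then show ?thesis
    unfolding carry_step_def using assms by (simp add: div_minus_right flip: mult_minus_right)
qed

lemma carry_step_eq_iff:
  assumes "b \<ge> 1"
  shows "carry_step b d c s = j \<longleftrightarrow> s \<in> {- b * j - c + d .. - b * j - c + d + b - 1}"
  using int_div_eq_iff[of b "c + s - d" "- j"] assms
  by (auto simp: carry_step_eq[OF assms])

lemma pmf_carry_joint:
  "pmf (carry_joint b d n t) (i, j) =
     pmf (carry_dist b d n t) i * pmf (map_pmf (carry_step b d i) (sum_dist b d n)) j"
proof -
  have "pmf (map_pmf (\<lambda>s. (c, carry_step b d c s)) (sum_dist b d n)) (i, j) =
      indicator {i} c * pmf (map_pmf (carry_step b d i) (sum_dist b d n)) j" for c
  proof -
    have "(\<lambda>s. (c, carry_step b d c s)) -` {(i, j)} =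
        (if c = i then carry_step b d i -` {j} else {})"
      by auto
    then show ?thesis by (simp add: pmf_map)
  qed
  then show ?thesis
    unfolding carry_joint_def pmf_bind integral_mult_left_zero by (simp add: measure_pmf_single)
qed

lemma trans_prob_eq_pmf_sum_dist:
  assumes "b \<ge> 1" and "pmf (carry_dist b d n t) i > 0"
  shows "trans_prob b d n t i j =
    real_of_int b * pmf (sum_dist b d (Suc n)) (- b * j - i + 2 * d + b - 1)"
proof -
  let ?lo = "- b * j - i + d" and ?T = "- b * j - i + 2 * d + b - 1"
  have "carry_step b d i -` {j} = {?lo .. ?lo + b - 1}"
    using carry_step_eq_iff[OF assms(1)] by blast
  then have "trans_prob b d n t i j = (\<Sum>s\<in>{?lo .. ?lo + b - 1}. pmf (sum_dist b d n) s)"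
    using assms(2)
    by (simp add: trans_prob_def pmf_carry_joint pmf_map measure_measure_pmf_finite)
  also have "\<dots> = (\<Sum>x\<in>digits b d. pmf (sum_dist b d n) (?T - x))"
    by (rule sum.reindex_bij_witness[where i="\<lambda>x. ?T - x" and j="\<lambda>s. ?T - s"])
       (auto simp: digits_def)
  finally show ?thesis
    using pmf_sum_dist_Suc[OF assms(1), of d n ?T] assms(1) by simp
qed

theorem theorem3:
  fixes b d :: int and n t :: nat and i j :: int
  assumes "b \<ge> 2" and "n \<ge> 1" and "0 \<in> digits b d"
    and "i \<in> state_space b d n" and "j \<in> state_space b d n"
    and "pmf (carry_dist b d n t) i > 0"
  shows "trans_prob b d n t i j =
    (1 / real_of_int b ^ n) *
    (\<Sum>r\<in>{0 .. - j + 1 + \<lfloor>real_of_int (- i - 1 + (1 - int n) * d) / real_of_int b\<rfloor>}.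
       (-1) ^ nat r * real ((n + 1) choose nat r) *
       (real_of_int (int n - b * (j - 1 + r) - i - 1 + (1 - int n) * d) gchoose n))"
proof -
  \<comment> \<open>Only \<open>b \<ge> 1\<close> and \<open>Pr(C\<^sub>t = i) > 0\<close> are needed.\<close>
  have b: "b \<ge> 1" using assms(1) by simp
  define X where "X = - i - 1 + (1 - int n) * d"
  define m where "m = - b * j - i + 2 * d + b - 1 - int (Suc n) * d"
  have "m = X + (1 - j) * b"
    by (simp add: m_def X_def algebra_simps)
  then have bound: "- j + 1 + \<lfloor>real_of_int X / real_of_int b\<rfloor> = m div b"
    using b by (simp add: floor_divide_of_int_eq)
  have summand: "int n - b * (j - 1 + r) - i - 1 + (1 - int n) * d = int n + m - b * r" for r
    by (simp add: m_def algebra_simps)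
  show ?thesis
    unfolding trans_prob_eq_pmf_sum_dist[OF b assms(6)] pmf_sum_dist_Suc_gchoose[OF b]
      summand X_def[symmetric] bound m_def[symmetric]
    using b by (simp add: field_simps)
qed

end
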